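(* There exist almost discrete Fréchet–Urysohn (Tychonoff) spaces $X$ and $Y$ such that $X\times Y$ is not a weakly Grothendieck space. (For instance, $X$ the countable sequential fan $S_\omega$ and $Y$ the sequential fan $S_{\mathfrak{c}}$ with $2^\omega$ many spines.)
   Context: A space is almost discrete if it has exactly one non-isolated point. $S_\kappa$ denotes the quotient of the disjoint sum of $\kappa$ convergent sequences (with their limits) obtained by identifying all the limit points to one point. $C_p(X)$ is the space of continuous real-valued functions on $X$ with the pointwise convergence topology. A space $Z$ is a $g$-space if every subset $A\subseteq Z$ such that every infinite subset of $A$ has an accumulation point in $Z$ has compact closure in $Z$; $X$ is weakly Grothendieck if $C_p(X)$ is a $g$-space. *)

theory Defs
  imports "HOL-Analysis.Analysis"
begin

definition tychonoff_space :: "'a topology \<Rightarrow> bool" where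
  "tychonoff_space X \<longleftrightarrow> completely_regular_space X \<and> Hausdorff_space X"

definition almost_discrete :: "'a topology \<Rightarrow> bool" where
  "almost_discrete X \<longleftrightarrow> (\<exists>!x. x \<in> topspace X \<and> \<not> openin X {x})"

definition frechet_urysohn :: "'a topology \<Rightarrow> bool" where
  "frechet_urysohn X \<longleftrightarrow>
     (\<forall>A x. A \<subseteq> topspace X \<and> x \<in> X closure_of A \<longrightarrow>
        (\<exists>\<sigma>::nat \<Rightarrow> 'a. range \<sigma> \<subseteq> A \<and> limitin X \<sigma> x sequentially))"

text \<open>C_p(X): continuous real functions on X (extensional, i.e. undefined off the
  carrier) with the topology of pointwise convergence, as a subspace of the product R^X.\<close>
definition Cp :: "'a topology \<Rightarrow> ('a \<Rightarrow> real) topology" where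
  "Cp X = subtopology (product_topology (\<lambda>_. euclideanreal) (topspace X))
            {f \<in> topspace (product_topology (\<lambda>_. euclideanreal) (topspace X)).
               continuous_map X euclideanreal f}"

definition g_space :: "'a topology \<Rightarrow> bool" where
  "g_space Z \<longleftrightarrow>
     (\<forall>A. A \<subseteq> topspace Z \<and>
          (\<forall>B. B \<subseteq> A \<and> infinite B \<longrightarrow> (\<exists>z \<in> topspace Z. z \<in> Z derived_set_of B))
        \<longrightarrow> compactin Z (Z closure_of A))"

definition weakly_grothendieck :: "'a topology \<Rightarrow> bool" where
  "weakly_grothendieck X \<longleftrightarrow> g_space (Cp X)"

end

theory Submission
  imports Defs
begin

text \<open>
  Take for \<open>X\<close> the countable fan and for \<open>Y\<close> a fan whose spines \<open>a\<close> are mapped onto all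
  functions \<open>code a : \<nat> \<Rightarrow> \<nat>\<close>. The diagonal, made of the pairs (point \<open>code a n\<close> of spine \<open>n\<close> of
  \<open>X\<close>, point \<open>n\<close> of spine \<open>a\<close> of \<open>Y\<close>), consists of isolated points of \<open>X \<times> Y\<close>. It is not closed:
  a neighbourhood of the pair of vertices contains the tails of \<open>X\<close> beyond some \<open>f\<close> and of \<open>Y\<close>
  beyond some \<open>g\<close>, and the diagonal point with \<open>code a = f\<close> and \<open>n = g a\<close> lies in both. But
  every countable subset of the diagonal is clopen, since the countably many functions \<open>code a\<close>
  involved are dominated by a single function.

  Hence the indicators of finite subsets of the diagonal form a set \<open>A \<subseteq> C\<^sub>p(X \<times> Y)\<close> every
  infinite subset of which accumulates (inside a compact \<open>{0,1}\<^sup>C\<close>, \<open>C\<close> countable) at the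
  continuous indicator of a countable subset of the diagonal. The indicator of the diagonal is
  discontinuous but lies in the pointwise closure of \<open>A\<close>, so the closure of \<open>A\<close> in
  \<open>C\<^sub>p(X \<times> Y)\<close> is not compact.
\<close>

lemma continuous_map_indicator_iff:
  assumes "W \<subseteq> topspace X"
  shows "continuous_map X euclideanreal (indicator W) \<longleftrightarrow> openin X W \<and> closedin X W"
proof
  assume cont: "continuous_map X euclideanreal (indicator W)"
  have pre: "{x \<in> topspace X. indicator W x \<in> S} = W" if "1 \<in> S" "(0::real) \<notin> S" for S
    using assms that by (auto simp: indicator_def)
  have "openin X {x \<in> topspace X. indicator W x \<in> {0::real<..}}"
    using cont by (rule openin_continuous_map_preimage) auto
  moreover have "closedin X {x \<in> topspace X. indicator W x \<in> {1::real}}"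
    using cont by (rule closedin_continuous_map_preimage) auto
  ultimately show "openin X W \<and> closedin X W"
    using pre[of "{0<..}"] pre[of "{1}"] by simp
next
  assume clopen: "openin X W \<and> closedin X W"
  show "continuous_map X euclideanreal (indicator W)"
    unfolding continuous_map
  proof (intro conjI allI impI)
    fix S :: "real set"
    have "{x \<in> topspace X. indicator W x \<in> S} =
          (if 1 \<in> S then W else {}) \<union> (if 0 \<in> S then topspace X - W else {})"
      using assms by (auto simp: indicator_def)
    then show "openin X {x \<in> topspace X. indicator W x \<in> S}"
      using clopen by (auto simp: closedin_def)
  qed auto
qed

lemma tychonoff_space_if_clopen_separation:
  assumes "t1_space X"
    and separation: "\<And>C x. closedin X C \<Longrightarrow> x \<in> topspace X - C \<Longrightarrow>
                        \<exists>W. openin X W \<and> closedin X W \<and> C \<subseteq> W \<and> x \<notin> W"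
  shows "tychonoff_space X"
  unfolding tychonoff_space_def
proof
  show "completely_regular_space X"
    unfolding completely_regular_space_def
  proof (intro allI impI)
    fix C x assume "closedin X C \<and> x \<in> topspace X - C"
    then obtain W where W: "openin X W" "closedin X W" "C \<subseteq> W" "x \<notin> W"
      using separation by blast
    then have "continuous_map X euclideanreal (indicator W)"
      by (simp add: continuous_map_indicator_iff openin_subset)
    then have "continuous_map X (top_of_set {0..1::real}) (indicator W)"
      by (simp add: continuous_map_in_subtopology Pi_iff indicator_def)
    then show "\<exists>f. continuous_map X (top_of_set {0..1::real}) f \<and> f x = 0 \<and> f ` C \<subseteq> {1}"
      using W by (intro exI[of _ "indicator W"]) auto
  qed
  show "Hausdorff_space X"
    unfolding Hausdorff_space_def
  proof (intro allI impI)
    fix x y assume xy: "x \<in> topspace X \<and> y \<in> topspace X \<and> x \<noteq> y"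
    then have "closedin X {y}" using \<open>t1_space X\<close> by (simp add: t1_space_closedin_singleton)
    then obtain W where "openin X W" "closedin X W" "y \<in> W" "x \<notin> W"
      using separation xy by blast
    then show "\<exists>U V. openin X U \<and> openin X V \<and> x \<in> U \<and> y \<in> V \<and> disjnt U V"
      using xy by (intro exI[of _ "topspace X - W"] exI[of _ W]) (auto simp: closedin_def disjnt_def)
  qed
qed

section \<open>Sequential fans\<close>

locale sequential_fan =
  fixes vertex :: 'a and I :: "'i set" and spine :: "'i \<Rightarrow> nat \<Rightarrow> 'a"
  assumes spine_inj: "\<And>i j k m. i \<in> I \<Longrightarrow> j \<in> I \<Longrightarrow> spine i k = spine j m \<Longrightarrow> i = j \<and> k = m"
    and spine_ne_vertex: "\<And>i k. i \<in> I \<Longrightarrow> spine i k \<noteq> vertex"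
    and spines_nonempty: "I \<noteq> {}"
begin

definition points :: "'a set" where
  "points = insert vertex {spine i k | i k. i \<in> I}"

lemma points_cases:
  assumes "x \<in> points"
  obtains "x = vertex" | i k where "i \<in> I" "x = spine i k"
  using assms by (auto simp: points_def)

lemma spine_in_points: "i \<in> I \<Longrightarrow> spine i k \<in> points"
  by (auto simp: points_def)

definition fan_open :: "'a set \<Rightarrow> bool" where
  "fan_open U \<longleftrightarrow> U \<subseteq> points \<and> (vertex \<in> U \<longrightarrow> (\<forall>i\<in>I. \<forall>\<^sub>F k in sequentially. spine i k \<in> U))"

lemma istopology_fan_open: "istopology fan_open"
  unfolding istopology_def
proof (intro conjI allI impI ballI)
  fix U V assume "fan_open U" "fan_open V"
  then show "fan_open (U \<inter> V)"
    by (auto simp: fan_open_def intro!: eventually_conj)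
next
  fix K assume K: "\<forall>U\<in>K. fan_open U"
  show "fan_open (\<Union>K)"
    unfolding fan_open_def
  proof (intro conjI impI ballI)
    show "\<Union>K \<subseteq> points" using K by (auto simp: fan_open_def)
    fix i assume "vertex \<in> \<Union>K" "i \<in> I"
    then obtain U where "U \<in> K" "vertex \<in> U" by blast
    then have "\<forall>\<^sub>F k in sequentially. spine i k \<in> U"
      using K \<open>i \<in> I\<close> by (auto simp: fan_open_def)
    then show "\<forall>\<^sub>F k in sequentially. spine i k \<in> \<Union>K"
      by eventually_elim (use \<open>U \<in> K\<close> in blast)
  qed
qed

definition fan :: "'a topology" where
  "fan = topology fan_open"

lemma openin_fan: "openin fan U \<longleftrightarrow> fan_open U"
  by (simp add: fan_def istopology_fan_open)

lemma topspace_fan: "topspace fan = points"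
proof -
  have "fan_open points" by (simp add: fan_open_def spine_in_points)
  then show ?thesis
    unfolding topspace_def openin_fan by (auto simp: fan_open_def)
qed

lemma openin_fan_avoiding_vertex: "U \<subseteq> points \<Longrightarrow> vertex \<notin> U \<Longrightarrow> openin fan U"
  by (simp add: openin_fan fan_open_def)

lemma openin_fan_singleton: "x \<in> points \<Longrightarrow> x \<noteq> vertex \<Longrightarrow> openin fan {x}"
  by (rule openin_fan_avoiding_vertex) auto

lemma openin_fan_remove_point:
  assumes "x \<noteq> vertex"
  shows "openin fan (points - {x})"
  unfolding openin_fan fan_open_def
proof (intro conjI impI ballI)
  fix i assume i: "i \<in> I"
  have "finite {k. spine i k = x}"
  proof (rule finite_subset)
    show "{k. spine i k = x} \<subseteq> {LEAST k. spine i k = x}"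
      using spine_inj[OF i i] by (auto intro: LeastI2)
  qed simp
  then have "\<forall>\<^sub>F k in sequentially. spine i k \<noteq> x"
    by (simp add: eventually_cofinite flip: cofinite_eq_sequentially)
  then show "\<forall>\<^sub>F k in sequentially. spine i k \<in> points - {x}"
    by eventually_elim (use i in \<open>simp add: spine_in_points\<close>)
qed auto

lemma closedin_fan_singleton: "x \<in> points \<Longrightarrow> closedin fan {x}"
  unfolding closedin_def topspace_fan
  by (cases "x = vertex") (auto intro: openin_fan_remove_point openin_fan_avoiding_vertex)

definition tail :: "('i \<Rightarrow> nat) \<Rightarrow> 'a set" where
  "tail g = insert vertex {spine i k | i k. i \<in> I \<and> g i \<le> k}"

lemma openin_tail: "openin fan (tail g)"
  unfolding openin_fan fan_open_def tail_def points_def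
  by (auto simp: eventually_sequentially)

lemma spine_in_tail_iff: "i \<in> I \<Longrightarrow> spine i k \<in> tail g \<longleftrightarrow> g i \<le> k"
  unfolding tail_def using spine_inj spine_ne_vertex by blast

lemma tail_subset_neighbourhood:
  assumes "openin fan U" "vertex \<in> U"
  obtains g where "tail g \<subseteq> U"
proof -
  have "\<forall>i\<in>I. \<exists>N. \<forall>k\<ge>N. spine i k \<in> U"
    using assms by (simp add: openin_fan fan_open_def eventually_sequentially)
  then obtain g where "\<forall>i\<in>I. \<forall>k\<ge>g i. spine i k \<in> U" by metis
  then have "tail g \<subseteq> U" using assms(2) by (auto simp: tail_def)
  then show ?thesis by (rule that)
qed

lemma limitin_fan_spine:
  assumes "i \<in> I" "filterlim r sequentially sequentially"
  shows "limitin fan (\<lambda>n. spine i (r n)) vertex sequentially"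
  unfolding limitin_def
proof (intro conjI allI impI)
  show "vertex \<in> topspace fan" by (simp add: topspace_fan points_def)
  fix U assume "openin fan U \<and> vertex \<in> U"
  then have "\<forall>\<^sub>F k in sequentially. spine i k \<in> U"
    using assms(1) by (simp add: openin_fan fan_open_def)
  then show "\<forall>\<^sub>F n in sequentially. spine i (r n) \<in> U"
    using assms(2) by (rule eventually_compose_filterlim)
qed

lemma almost_discrete_fan: "almost_discrete fan"
  unfolding almost_discrete_def topspace_fan
proof (rule ex1I[of _ vertex])
  obtain i where "i \<in> I" using spines_nonempty by blast
  then have "\<not> fan_open {vertex}"
    using spine_ne_vertex by (auto simp: fan_open_def dest: eventually_happens')
  then show "vertex \<in> points \<and> \<not> openin fan {vertex}"
    by (simp add: openin_fan points_def)
qed (use openin_fan_singleton in blast)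

lemma frechet_urysohn_fan: "frechet_urysohn fan"
  unfolding frechet_urysohn_def
proof (intro allI impI)
  fix A x assume Ax: "A \<subseteq> topspace fan \<and> x \<in> fan closure_of A"
  then have x: "x \<in> points" by (simp add: in_closure_of topspace_fan)
  show "\<exists>\<sigma>::nat \<Rightarrow> 'a. range \<sigma> \<subseteq> A \<and> limitin fan \<sigma> x sequentially"
  proof (cases "x \<in> A")
    case True
    then show ?thesis using x by (intro exI[of _ "\<lambda>_. x"]) (auto simp: topspace_fan)
  next
    case False
    then have x_vertex: "x = vertex"
      using Ax openin_fan_singleton[OF x] unfolding in_closure_of by blast
    have "\<exists>i\<in>I. infinite {k. spine i k \<in> A}"
    proof (rule ccontr)
      assume "\<not> ?thesis"
      then have "\<forall>i\<in>I. \<forall>\<^sub>F k in sequentially. spine i k \<notin> A"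
        by (simp add: eventually_cofinite flip: cofinite_eq_sequentially)
      then have "openin fan (points - A)"
        by (auto simp: openin_fan fan_open_def spine_in_points elim!: eventually_mono)
      then show False
        using Ax False x x_vertex unfolding in_closure_of by blast
    qed
    then obtain i where i: "i \<in> I" and inf: "infinite {k. spine i k \<in> A}" by blast
    let ?r = "enumerate {k. spine i k \<in> A}"
    have "range (\<lambda>n. spine i (?r n)) \<subseteq> A"
      using enumerate_in_set[OF inf] by auto
    moreover have "limitin fan (\<lambda>n. spine i (?r n)) x sequentially"
      using x_vertex limitin_fan_spine[OF i filterlim_subseq[OF strict_mono_enumerate[OF inf]]] by simp
    ultimately show ?thesis by blast
  qed
qed

lemma tychonoff_space_fan: "tychonoff_space fan"
proof (rule tychonoff_space_if_clopen_separation)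
  show "t1_space fan"
    by (simp add: t1_space_closedin_singleton topspace_fan closedin_fan_singleton)
  fix C x assume C: "closedin fan C" and x: "x \<in> topspace fan - C"
  have CS: "C \<subseteq> points" using closedin_subset[OF C] by (simp add: topspace_fan)
  show "\<exists>W. openin fan W \<and> closedin fan W \<and> C \<subseteq> W \<and> x \<notin> W"
  proof (cases "x = vertex")
    case True
    then show ?thesis using C CS x openin_fan_avoiding_vertex by blast
  next
    case False
    have "closedin fan (points - {x})"
      using x openin_fan_singleton[of x] False
      by (simp add: closedin_def topspace_fan Diff_Diff_Int Int_absorb1)
    then show ?thesis
      using openin_fan_remove_point[OF False] CS x by (intro exI[of _ "points - {x}"]) auto
  qed
qed

end

section \<open>A non-closed discrete subset of a product of two fans\<close>

locale fan_pair =
  X: sequential_fan x0 "UNIV :: nat set" ex + Y: sequential_fan y0 I ey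
  for x0 :: 'a and ex and y0 :: 'b and I :: "'i set" and ey +
  fixes code :: "'i \<Rightarrow> nat \<Rightarrow> nat"
  assumes code_onto: "\<And>f. \<exists>a\<in>I. code a = f"
begin

abbreviation Z :: "('a \<times> 'b) topology" where
  "Z \<equiv> prod_topology X.fan Y.fan"

definition diagonal :: "('a \<times> 'b) set" where
  "diagonal = {(ex n (code a n), ey a n) | a n. a \<in> I}"

lemma diagonal_subset_topspace: "diagonal \<subseteq> topspace Z"
  by (auto simp: diagonal_def X.topspace_fan Y.topspace_fan X.spine_in_points Y.spine_in_points)

lemma diagonal_ne_vertex: "(x0, y0) \<notin> diagonal"
  unfolding diagonal_def using X.spine_ne_vertex by auto

lemma openin_diagonal_singleton:
  assumes "p \<in> diagonal"
  shows "openin Z {p}"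
proof -
  obtain a n where a: "a \<in> I" and p: "p = (ex n (code a n), ey a n)"
    using assms by (auto simp: diagonal_def)
  have "openin X.fan {ex n (code a n)}"
    by (simp add: X.openin_fan_singleton X.spine_in_points X.spine_ne_vertex)
  moreover have "openin Y.fan {ey a n}"
    using a by (simp add: Y.openin_fan_singleton Y.spine_in_points Y.spine_ne_vertex)
  ultimately show ?thesis
    using p openin_prod_Times_iff[of X.fan Y.fan "{ex n (code a n)}" "{ey a n}"] by simp
qed

lemma openin_diagonal_subset: "W \<subseteq> diagonal \<Longrightarrow> openin Z W"
  unfolding openin_subopen[of Z W] using openin_diagonal_singleton by blast

lemma separated_from_diagonal:
  assumes "p \<in> topspace Z" "p \<notin> diagonal" "p \<noteq> (x0, y0)"
  obtains N where "openin Z N" "p \<in> N" "N \<inter> diagonal = {}"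
proof -
  obtain x y where p: "p = (x, y)" and x: "x \<in> X.points" and y: "y \<in> Y.points"
    using assms(1) by (auto simp: X.topspace_fan Y.topspace_fan)
  show ?thesis
  proof (cases rule: X.points_cases[OF x])
    case x0: 1
    then obtain a k where a: "a \<in> I" and y_spine: "y = ey a k"
      using assms(3) p by (cases rule: Y.points_cases[OF y]) auto
    let ?N = "(X.points - {ex k (code a k)}) \<times> {y}"
    have "openin Z ?N"
      using y y_spine a Y.spine_ne_vertex
      by (simp add: openin_prod_Times_iff X.openin_fan_remove_point X.spine_ne_vertex
          Y.openin_fan_singleton)
    moreover have "?N \<inter> diagonal = {}"
      using y_spine a by (auto simp: diagonal_def dest: Y.spine_inj)
    moreover have "p \<in> ?N"
      using p x0 X.spine_ne_vertex by (auto simp: X.points_def)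
    ultimately show ?thesis using that by blast
  next
    case x_spine: (2 n m)
    show ?thesis
    proof (cases rule: Y.points_cases[OF y])
      case 1
      let ?N = "{x} \<times> Y.tail (\<lambda>_. Suc n)"
      have "openin Z ?N"
        using x x_spine X.spine_ne_vertex
        by (simp add: openin_prod_Times_iff X.openin_fan_singleton Y.openin_tail)
      moreover have "?N \<inter> diagonal = {}"
        using x_spine
        by (auto simp: diagonal_def Y.spine_in_tail_iff dest: X.spine_inj[OF UNIV_I UNIV_I])
      moreover have "p \<in> ?N" using p 1 by (simp add: Y.tail_def)
      ultimately show ?thesis using that by blast
    next
      case (2 a k)
      have "openin X.fan {x}" "openin Y.fan {y}"
        using x y x_spine 2 X.spine_ne_vertex Y.spine_ne_vertex
        by (simp_all add: X.openin_fan_singleton Y.openin_fan_singleton)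
      then have "openin Z ({x} \<times> {y})" by (simp only: openin_prod_Times_iff simp_thms)
      then show ?thesis using that assms(2) p by auto
    qed
  qed
qed

lemma vertex_in_closure_diagonal: "(x0, y0) \<in> Z closure_of diagonal"
  unfolding in_closure_of
proof (intro conjI allI impI)
  show "(x0, y0) \<in> topspace Z"
    by (simp add: X.topspace_fan Y.topspace_fan X.points_def Y.points_def)
  fix N assume N: "(x0, y0) \<in> N \<and> openin Z N"
  then obtain U V where UV: "openin X.fan U" "openin Y.fan V" "x0 \<in> U" "y0 \<in> V" "U \<times> V \<subseteq> N"
    unfolding openin_prod_topology_alt by blast
  obtain f where f: "X.tail f \<subseteq> U" using X.tail_subset_neighbourhood UV(1,3) by blast
  obtain g where g: "Y.tail g \<subseteq> V" using Y.tail_subset_neighbourhood UV(2,4) by blast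
  obtain a where a: "a \<in> I" "code a = f" using code_onto by blast
  have "(ex (g a) (code a (g a)), ey a (g a)) \<in> diagonal"
    using a by (auto simp: diagonal_def)
  moreover have "ex (g a) (code a (g a)) \<in> U" "ey a (g a) \<in> V"
    using a f g X.spine_in_tail_iff Y.spine_in_tail_iff by auto
  ultimately show "\<exists>p. p \<in> diagonal \<and> p \<in> N" using UV(5) by blast
qed

lemma not_closedin_diagonal: "\<not> closedin Z diagonal"
  using vertex_in_closure_diagonal diagonal_ne_vertex closure_of_closedin by fastforce

lemma countable_diagonal_indices:
  assumes "countable W"
  shows "countable {a \<in> I. \<exists>n. (ex n (code a n), ey a n) \<in> W}"
proof -
  define pt where "pt = (\<lambda>(a, n). (ex n (code a n), ey a n))"
  define Q where "Q = {(a, n). a \<in> I \<and> pt (a, n) \<in> W}"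
  have "inj_on pt Q"
    by (auto simp: inj_on_def pt_def Q_def dest: Y.spine_inj)
  moreover have "countable (pt ` Q)"
    using assms by (rule countable_subset[rotated]) (auto simp: Q_def)
  ultimately have "countable Q" by (rule countable_image_inj_on[rotated])
  moreover have "{a \<in> I. \<exists>n. (ex n (code a n), ey a n) \<in> W} = fst ` Q"
    by (force simp: Q_def pt_def)
  ultimately show ?thesis by simp
qed

lemma vertex_not_in_closure_countable:
  assumes "W \<subseteq> diagonal" "countable W"
  obtains N where "openin Z N" "(x0, y0) \<in> N" "N \<inter> W = {}"
proof -
  define L where "L = {a \<in> I. \<exists>n. (ex n (code a n), ey a n) \<in> W}"
  have "countable L" unfolding L_def using assms(2) by (rule countable_diagonal_indices)
  define enum where "enum = from_nat_into L"
  \<comment> \<open>Diagonalisation: \<open>f n\<close> exceeds \<open>code a n\<close> for every \<open>a = enum j\<close> with \<open>j \<le> n\<close>,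
    and \<open>g\<close> forces \<open>n\<close> beyond the index of \<open>a\<close>.\<close>
  define f where "f n = Suc (\<Sum>j\<le>n. code (enum j) n)" for n
  define g where "g a = Suc (LEAST j. enum j = a)" for a
  have "X.tail f \<times> Y.tail g \<inter> W = {}"
  proof (rule ccontr)
    assume "X.tail f \<times> Y.tail g \<inter> W \<noteq> {}"
    then obtain a n where a: "a \<in> I" and in_W: "(ex n (code a n), ey a n) \<in> W"
      and in_tails: "ex n (code a n) \<in> X.tail f" "ey a n \<in> Y.tail g"
      using assms(1) unfolding diagonal_def by blast
    have "a \<in> L" using a in_W by (auto simp: L_def)
    then have "\<exists>j. enum j = a"
      unfolding enum_def by (rule from_nat_into_surj[OF \<open>countable L\<close>])
    then have j: "enum (LEAST j. enum j = a) = a" by (rule LeastI_ex)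
    have "f n \<le> code a n" using in_tails(1) X.spine_in_tail_iff by simp
    moreover have "(LEAST j. enum j = a) < n"
      using in_tails(2) Y.spine_in_tail_iff[OF a] by (simp add: g_def)
    then have "code a n \<le> (\<Sum>j\<le>n. code (enum j) n)"
      using j by (metis atMost_iff finite_atMost less_imp_le member_le_sum zero_le)
    ultimately show False by (simp add: f_def)
  qed
  moreover have "openin Z (X.tail f \<times> Y.tail g)"
    by (simp add: openin_prod_Times_iff X.openin_tail Y.openin_tail)
  moreover have "(x0, y0) \<in> X.tail f \<times> Y.tail g"
    by (simp add: X.tail_def Y.tail_def)
  ultimately show ?thesis using that by blast
qed

lemma closedin_countable_diagonal_subset:
  assumes "W \<subseteq> diagonal" "countable W"
  shows "closedin Z W"
  unfolding closedin_def
proof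
  show "W \<subseteq> topspace Z" using assms(1) diagonal_subset_topspace by blast
  have "\<exists>N. openin Z N \<and> p \<in> N \<and> N \<inter> W = {}" if p: "p \<in> topspace Z - W" for p
  proof -
    consider "p \<in> diagonal" | "p = (x0, y0)" | "p \<notin> diagonal" "p \<noteq> (x0, y0)" by blast
    then show ?thesis
    proof cases
      case 1
      then show ?thesis using p openin_diagonal_singleton by blast
    next
      case 2
      then show ?thesis using vertex_not_in_closure_countable[OF assms] by metis
    next
      case 3
      then obtain N where "openin Z N" "p \<in> N" "N \<inter> diagonal = {}"
        using p separated_from_diagonal by blast
      then show ?thesis using assms(1) by blast
    qed
  qed
  then show "openin Z (topspace Z - W)"
    unfolding openin_subopen[of Z "topspace Z - W"] using openin_subset by fastforce
qed

end

section \<open>Pointwise topology and the \<open>g\<close>-space property\<close>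

text \<open>Points of \<^const>\<open>Cp\<close> are extensional functions, hence the restriction.\<close>

definition indicator_in :: "'a topology \<Rightarrow> 'a set \<Rightarrow> 'a \<Rightarrow> real" where
  "indicator_in Z W = restrict (indicator W) (topspace Z)"

lemma topspace_Cp:
  "topspace (Cp Z) = {f \<in> topspace (powertop_real (topspace Z)). continuous_map Z euclideanreal f}"
  by (auto simp: Cp_def)

lemma indicator_in_topspace_Cp_iff:
  assumes "W \<subseteq> topspace Z"
  shows "indicator_in Z W \<in> topspace (Cp Z) \<longleftrightarrow> openin Z W \<and> closedin Z W"
  using assms by (simp add: topspace_Cp indicator_in_def continuous_map_indicator_iff)

lemma indicator_in_closure_finite_subsets:
  "indicator_in Z T \<in> powertop_real (topspace Z) closure_of (indicator_in Z ` {F. finite F \<and> F \<subseteq> T})"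
  unfolding in_closure_of
proof (intro conjI allI impI)
  show "indicator_in Z T \<in> topspace (powertop_real (topspace Z))"
    by (simp add: indicator_in_def)
  fix N assume N: "indicator_in Z T \<in> N \<and> openin (powertop_real (topspace Z)) N"
  then obtain U where U: "finite {z \<in> topspace Z. U z \<noteq> UNIV}" "\<forall>z \<in> topspace Z. open (U z)"
    "indicator_in Z T \<in> Pi\<^sub>E (topspace Z) U" "Pi\<^sub>E (topspace Z) U \<subseteq> N"
    unfolding openin_product_topology_alt by auto
  define F where "F = T \<inter> {z \<in> topspace Z. U z \<noteq> UNIV}"
  have "indicator_in Z F \<in> Pi\<^sub>E (topspace Z) U"
    using U(3) by (auto simp: PiE_iff indicator_in_def F_def indicator_def)
  moreover have "finite F" "F \<subseteq> T" using U(1) by (auto simp: F_def)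
  ultimately show "\<exists>f. f \<in> indicator_in Z ` {F. finite F \<and> F \<subseteq> T} \<and> f \<in> N"
    using U(4) by blast
qed

lemma indicator_in_Pow_eq_PiE:
  assumes "C \<subseteq> topspace Z"
  shows "indicator_in Z ` Pow C = Pi\<^sub>E (topspace Z) (\<lambda>z. if z \<in> C then {0, 1} else {0})"
proof
  show "indicator_in Z ` Pow C \<subseteq> Pi\<^sub>E (topspace Z) (\<lambda>z. if z \<in> C then {0, 1} else {0})"
    by (auto simp: indicator_in_def indicator_def)
  show "Pi\<^sub>E (topspace Z) (\<lambda>z. if z \<in> C then {0, 1} else {0}) \<subseteq> indicator_in Z ` Pow C"
  proof
    fix g :: "'a \<Rightarrow> real" assume g: "g \<in> Pi\<^sub>E (topspace Z) (\<lambda>z. if z \<in> C then {0, 1} else {0})"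
    have "g = indicator_in Z {z \<in> C. g z = 1}"
    proof
      fix z show "g z = indicator_in Z {z \<in> C. g z = 1} z"
        using g assms by (cases "z \<in> topspace Z") (auto simp: indicator_in_def PiE_iff extensional_def split: if_splits)
    qed
    then show "g \<in> indicator_in Z ` Pow C" by blast
  qed
qed

lemma product_closure_subset_Cp:
  assumes "A \<subseteq> topspace (Cp Z)" "compactin (Cp Z) (Cp Z closure_of A)"
  shows "powertop_real (topspace Z) closure_of A \<subseteq> topspace (Cp Z)"
proof -
  let ?K = "Cp Z closure_of A"
  have "compactin (powertop_real (topspace Z)) ?K"
    using assms(2) unfolding Cp_def compactin_subtopology by blast
  moreover have "Hausdorff_space (powertop_real (topspace Z))"
    by (simp add: Hausdorff_space_product_topology)
  ultimately have "closedin (powertop_real (topspace Z)) ?K"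
    using compactin_imp_closedin by blast
  moreover have "A \<subseteq> ?K" using assms(1) by (rule closure_of_subset)
  ultimately have "powertop_real (topspace Z) closure_of A \<subseteq> ?K"
    using closure_of_minimal by blast
  moreover have "?K \<subseteq> topspace (Cp Z)" by (rule closure_of_subset_topspace)
  ultimately show ?thesis by (rule order_trans)
qed

context
  fixes Z :: "'a topology" and T :: "'a set"
  assumes T_subset: "T \<subseteq> topspace Z"
    and T_subsets_open: "\<And>W. W \<subseteq> T \<Longrightarrow> openin Z W"
    and T_countable_subsets_closed: "\<And>W. W \<subseteq> T \<Longrightarrow> countable W \<Longrightarrow> closedin Z W"
begin

lemma indicator_in_countable_subset_Cp: "W \<subseteq> T \<Longrightarrow> countable W \<Longrightarrow> indicator_in Z W \<in> topspace (Cp Z)"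
  using T_subset by (simp add: indicator_in_topspace_Cp_iff T_subsets_open T_countable_subsets_closed)

lemma finite_subset_indicators_Cp: "indicator_in Z ` {F. finite F \<and> F \<subseteq> T} \<subseteq> topspace (Cp Z)"
  by (auto intro: indicator_in_countable_subset_Cp countable_finite)

lemma finite_subset_indicators_accumulate:
  assumes B: "B \<subseteq> indicator_in Z ` {F. finite F \<and> F \<subseteq> T}" "infinite B"
  shows "\<exists>g \<in> topspace (Cp Z). g \<in> Cp Z derived_set_of B"
proof -
  obtain r :: "nat \<Rightarrow> ('a \<Rightarrow> real)" where r: "inj r" "range r \<subseteq> B"
    using infinite_countable_subset[OF B(2)] by blast
  define B0 where "B0 = range r"
  have B0: "B0 \<subseteq> B" "countable B0" "infinite B0"
    using r by (simp_all add: B0_def range_inj_infinite)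
  have "countable B0 \<and> B0 \<subseteq> indicator_in Z ` {F. finite F \<and> F \<subseteq> T}"
    using B0 B(1) by blast
  then obtain \<F> where \<F>: "countable \<F>" "\<F> \<subseteq> {F. finite F \<and> F \<subseteq> T}" "B0 = indicator_in Z ` \<F>"
    unfolding countable_subset_image by blast
  define C where "C = (\<Union>F\<in>\<F>. F)"
  have "countable C"
    unfolding C_def using \<F>(1,2) by (intro countable_UN) (auto intro: countable_finite)
  have "C \<subseteq> T" using \<F>(2) by (auto simp: C_def)
  have "B0 \<subseteq> indicator_in Z ` Pow C" using \<F>(3) by (auto simp: C_def)
  moreover have "compactin (powertop_real (topspace Z)) (indicator_in Z ` Pow C)"
    using \<open>C \<subseteq> T\<close> T_subset
    by (simp add: indicator_in_Pow_eq_PiE compactin_PiE finite_imp_compactin)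
  ultimately have "indicator_in Z ` Pow C \<inter> powertop_real (topspace Z) derived_set_of B0 \<noteq> {}"
    using B0(3) compactin_imp_Bolzano_Weierstrass by blast
  then obtain W where "W \<subseteq> C" and acc: "indicator_in Z W \<in> powertop_real (topspace Z) derived_set_of B0"
    by blast
  have "countable W" using \<open>W \<subseteq> C\<close> \<open>countable C\<close> by (rule countable_subset)
  then have cont: "indicator_in Z W \<in> topspace (Cp Z)"
    using \<open>W \<subseteq> C\<close> \<open>C \<subseteq> T\<close> by (intro indicator_in_countable_subset_Cp) auto
  have "B \<subseteq> topspace (Cp Z)"
    using B(1) finite_subset_indicators_Cp by (rule order_trans)
  then have "Cp Z derived_set_of B = topspace (Cp Z) \<inter> powertop_real (topspace Z) derived_set_of B"
    by (simp add: Cp_def derived_set_of_subtopology Int_absorb1)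
  moreover have "powertop_real (topspace Z) derived_set_of B0 \<subseteq> powertop_real (topspace Z) derived_set_of B"
    using B0(1) by (rule derived_set_of_mono)
  ultimately show ?thesis
    using cont acc by blast
qed

lemma not_g_space_Cp_if_not_closedin:
  assumes "\<not> closedin Z T"
  shows "\<not> g_space (Cp Z)"
proof
  assume "g_space (Cp Z)"
  let ?A = "indicator_in Z ` {F. finite F \<and> F \<subseteq> T}"
  have A: "?A \<subseteq> topspace (Cp Z)" by (rule finite_subset_indicators_Cp)
  then have "compactin (Cp Z) (Cp Z closure_of ?A)"
    using \<open>g_space (Cp Z)\<close> finite_subset_indicators_accumulate by (auto simp: g_space_def)
  then have "indicator_in Z T \<in> topspace (Cp Z)"
    using product_closure_subset_Cp[OF A] indicator_in_closure_finite_subsets by blast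
  then show False
    using assms T_subset by (simp add: indicator_in_topspace_Cp_iff)
qed

end

lemma nat_functions_lepoll_nat_sets: "(UNIV :: (nat \<Rightarrow> nat) set) \<lesssim> (UNIV :: nat set set)"
  unfolding lepoll_def
proof (intro exI conjI)
  show "inj (\<lambda>f. range (\<lambda>n. prod_encode (n, f n)))"
  proof (rule injI, rule ext)
    fix f g :: "nat \<Rightarrow> nat" and n
    assume "range (\<lambda>n. prod_encode (n, f n)) = range (\<lambda>n. prod_encode (n, g n))"
    then have "prod_encode (n, f n) \<in> range (\<lambda>n. prod_encode (n, g n))" by blast
    then obtain m where "prod_encode (n, f n) = prod_encode (m, g m)" by blast
    then show "f n = g n" by (auto simp: prod_encode_eq)
  qed
qed simp

lemma unit_interval_onto_nat_functions: "\<exists>code :: real \<Rightarrow> nat \<Rightarrow> nat. \<forall>f. \<exists>a\<in>{0..<1}. code a = f"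
proof -
  obtain enc :: "(nat \<Rightarrow> nat) \<Rightarrow> real" where enc: "inj enc" "range enc \<subseteq> {0..<1}"
    using lepoll_trans[OF nat_functions_lepoll_nat_sets nat_sets_lepoll_reals01]
    unfolding lepoll_def by blast
  have "\<exists>a\<in>{0..<1}. inv enc a = f" for f
  proof
    show "inv enc (enc f) = f" using enc(1) by simp
    show "enc f \<in> {0..<1}" using enc(2) by blast
  qed
  then show ?thesis by blast
qed

lemma sequential_fan_nat: "sequential_fan 0 (UNIV :: nat set) (\<lambda>n m. Suc (prod_encode (n, m)))"
  by unfold_locales (auto simp: prod_encode_eq)

lemma sequential_fan_unit_interval: "sequential_fan (-1) {0..<1::real} (\<lambda>a k. a + real k)"
proof
  fix a b :: real and k m
  assume a: "a \<in> {0..<1}" and b: "b \<in> {0..<1}" and eq: "a + real k = b + real m"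
  have "\<lfloor>a + real k\<rfloor> = int k" using a by (intro floor_unique) auto
  moreover have "\<lfloor>b + real m\<rfloor> = int m" using b by (intro floor_unique) auto
  ultimately have "k = m" using eq by simp
  then show "a = b \<and> k = m" using eq by simp
qed auto

theorem proposition11:
  shows "\<exists>(X :: nat topology) (Y :: real topology).
           almost_discrete X \<and> frechet_urysohn X \<and> tychonoff_space X \<and>
           almost_discrete Y \<and> frechet_urysohn Y \<and> tychonoff_space Y \<and>
           \<not> weakly_grothendieck (prod_topology X Y)"
proof -
  obtain code :: "real \<Rightarrow> nat \<Rightarrow> nat" where code: "\<forall>f. \<exists>a\<in>{0..<1}. code a = f"
    using unit_interval_onto_nat_functions by blast
  have "fan_pair 0 (\<lambda>n m. Suc (prod_encode (n, m))) (-1) {0..<1} (\<lambda>a k. a + real k) code"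
    by (rule fan_pair.intro[OF sequential_fan_nat sequential_fan_unit_interval fan_pair_axioms.intro])
      (use code in blast)
  then interpret fans: fan_pair 0 "\<lambda>n m. Suc (prod_encode (n, m))" "-1" "{0..<1}" "\<lambda>a k. a + real k" code .
  have "\<not> g_space (Cp fans.Z)"
    using fans.diagonal_subset_topspace fans.openin_diagonal_subset
      fans.closedin_countable_diagonal_subset fans.not_closedin_diagonal
    by (rule not_g_space_Cp_if_not_closedin)
  then show ?thesis
    unfolding weakly_grothendieck_def
    using fans.X.almost_discrete_fan fans.X.frechet_urysohn_fan fans.X.tychonoff_space_fan
      fans.Y.almost_discrete_fan fans.Y.frechet_urysohn_fan fans.Y.tychonoff_space_fan
    by blast
qed

end
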